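(* Let $H=([n],E)$ be a hypergraph and $H'=([n],E')$ with $E'\subseteq E$. Let $H^*=([n],E^* )$ be any hypergraph such that for every edge $F\in E$ there exists $F^*\in E^*$ with $F^*\subseteq F$. Then for all $0\le i\le n$, \[0\le f_i(\chi_{H^*}(k))\le f_i(\chi_H(k))\le f_i(\chi_{H'}(k)).\]
   Context: Hypergraphs $([n],E)$ have edges that are nonempty subsets of $[n]$, with no edge of cardinality 1. A proper $k$-coloring is a map $[n]\to[k]$ such that no edge is monochromatic; $\chi_H(k)$ is the number of proper $k$-colorings, a polynomial in $k$ of degree at most $n$. For a polynomial $p(k)$ of degree at most $n$, its $f$-vector $(f_{-1},f_0,\dots,f_n)$ is defined by $p(k)=\sum_{i=0}^n f_i(p)\binom{k-1}{i}$ and $f_{-1}=1$. *)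

theory Defs
  imports Complex_Main "HOL-Library.FuncSet"
begin

definition hypergraph :: "nat \<Rightarrow> nat set set \<Rightarrow> bool" where
  "hypergraph n E \<longleftrightarrow> (\<forall>F\<in>E. F \<subseteq> {1..n} \<and> F \<noteq> {} \<and> card F \<noteq> 1)"

definition chi :: "nat \<Rightarrow> nat set set \<Rightarrow> nat \<Rightarrow> nat" where
  "chi n E k = card {c \<in> {1..n} \<rightarrow>\<^sub>E {1..k}.
      \<forall>F\<in>E. \<not> (\<exists>a. \<forall>v\<in>F. c v = a)}"

text \<open>Entries with index > n are set to 0 to make the coefficient vector unique.\<close>
definition fvec :: "nat \<Rightarrow> (nat \<Rightarrow> real) \<Rightarrow> nat \<Rightarrow> real" where
  "fvec n p = (THE f. (\<forall>i>n. f i = 0) \<and>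
      (\<forall>k::nat. k \<ge> 1 \<longrightarrow> p k = (\<Sum>i\<le>n. f i * real ((k - 1) choose i))))"

end

theory Submission
  imports Defs
begin

(* For a hypergraph E on [n] let a_j(E) be the number of proper colourings
   of [n] whose set of used colours is exactly {1..j}.  This number depends only on j,
   not on which j-element colour set is used, so grouping the proper k-colourings by
   their set of used colours gives
       chi_E(k) = sum_{j<=n} a_j(E) * (k choose j).
   Pascal's rule (k choose j) = (k-1 choose j) + (k-1 choose j-1) turns this into
       chi_E(k) = sum_{i<=n} (a_i(E) + a_(i+1)(E)) * (k-1 choose i),
   and since the binomial basis is linearly independent, f_i(chi_E) = a_i(E) + a_(i+1)(E).
   These numbers are nonnegative, and a_j is monotone with respect to the relation
   "every proper colouring for E is proper for E'", which holds when E' is a subset of E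
   and when every edge of E contains an edge of the other hypergraph. *)

definition proper :: "nat set set \<Rightarrow> (nat \<Rightarrow> nat) \<Rightarrow> bool" where
  "proper E c \<longleftrightarrow> (\<forall>F\<in>E. \<not> (\<exists>a. \<forall>v\<in>F. c v = a))"

lemma proper_subset: "E' \<subseteq> E \<Longrightarrow> proper E c \<Longrightarrow> proper E' c"
  by (auto simp: proper_def)

lemma proper_refine:
  assumes "\<forall>F\<in>E. \<exists>Fs\<in>Estar. Fs \<subseteq> F" and "proper Estar c"
  shows "proper E c"
  unfolding proper_def
proof (intro ballI notI)
  fix F assume "F \<in> E" and "\<exists>a. \<forall>v\<in>F. c v = a"
  then obtain a Fs where "\<forall>v\<in>F. c v = a" "Fs \<in> Estar" "Fs \<subseteq> F"
    using assms(1) by blast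
  then show False using assms(2) unfolding proper_def by blast
qed

lemma proper_restrict:
  assumes "\<forall>F\<in>E. F \<subseteq> A"
  shows "proper E (restrict c A) \<longleftrightarrow> proper E c"
proof -
  have "(\<forall>v\<in>F. restrict c A v = a) \<longleftrightarrow> (\<forall>v\<in>F. c v = a)" if "F \<in> E" for F a
    using assms that by auto
  then show ?thesis unfolding proper_def by blast
qed

lemma proper_comp_inj:
  assumes inj: "inj_on \<sigma> (c ` \<Union>E)"
  shows "proper (E :: nat set set) (\<sigma> \<circ> c) \<longleftrightarrow> proper E c"
proof -
  have "(\<exists>a. \<forall>v\<in>F. \<sigma> (c v) = a) \<longleftrightarrow> (\<exists>b. \<forall>v\<in>F. c v = b)" if F: "F \<in> E" for F
  proof
    assume "\<exists>a. \<forall>v\<in>F. \<sigma> (c v) = a"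
    then obtain a where a: "\<forall>v\<in>F. \<sigma> (c v) = a" by blast
    have "\<forall>v\<in>F. c v = c w" if w: "w \<in> F" for w
    proof
      fix v assume v: "v \<in> F"
      have "\<sigma> (c v) = \<sigma> (c w)" using a v w by simp
      moreover have "c v \<in> c ` \<Union>E" "c w \<in> c ` \<Union>E" using F v w by auto
      ultimately show "c v = c w" using inj by (meson inj_onD)
    qed
    then show "\<exists>b. \<forall>v\<in>F. c v = b" by (cases "F = {}") blast+
  qed auto
  then show ?thesis unfolding proper_def by auto
qed

definition onto_colorings :: "nat \<Rightarrow> nat set set \<Rightarrow> nat set \<Rightarrow> (nat \<Rightarrow> nat) set" where
  "onto_colorings n E S = {c \<in> {1..n} \<rightarrow>\<^sub>E S. proper E c \<and> c ` {1..n} = S}"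

definition onto_count :: "nat \<Rightarrow> nat set set \<Rightarrow> nat \<Rightarrow> nat" where
  "onto_count n E j = card (onto_colorings n E {1..j})"

lemma finite_onto_colorings: "finite S \<Longrightarrow> finite (onto_colorings n E S)"
  unfolding onto_colorings_def
  by (rule finite_subset[of _ "{1..n} \<rightarrow>\<^sub>E S"]) (auto intro: finite_PiE)

lemma card_onto_colorings_le:
  assumes fT: "finite T" and bij: "bij_betw \<sigma> S T" and edges: "\<forall>F\<in>E. F \<subseteq> {1..n}"
  shows "card (onto_colorings n E S) \<le> card (onto_colorings n E T)"
proof -
  have inj: "inj_on \<sigma> S" and im: "\<sigma> ` S = T" using bij by (auto simp: bij_betw_def)
  define rename where "rename c = restrict (\<sigma> \<circ> c) {1..n}" for c :: "nat \<Rightarrow> nat"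
  have maps: "rename ` onto_colorings n E S \<subseteq> onto_colorings n E T"
  proof clarify
    fix c assume "c \<in> onto_colorings n E S"
    then have cP: "c \<in> {1..n} \<rightarrow>\<^sub>E S" and "proper E c" and cim: "c ` {1..n} = S"
      by (auto simp: onto_colorings_def)
    have "c ` \<Union>E \<subseteq> S" using cP edges by blast
    then have "proper E (\<sigma> \<circ> c)"
      using \<open>proper E c\<close> proper_comp_inj inj_on_subset[OF inj] by blast
    moreover have "rename c ` {1..n} = T"
      using cim im unfolding rename_def by (auto simp: image_image)
    ultimately show "rename c \<in> onto_colorings n E T"
      using cP im edges by (auto simp: onto_colorings_def rename_def proper_restrict)
  qed
  have "inj_on rename (onto_colorings n E S)"
  proof (rule inj_onI)
    fix c c' assume "c \<in> onto_colorings n E S" "c' \<in> onto_colorings n E S"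
      and eq: "rename c = rename c'"
    then have cP: "c \<in> {1..n} \<rightarrow>\<^sub>E S" "c' \<in> {1..n} \<rightarrow>\<^sub>E S"
      by (auto simp: onto_colorings_def)
    show "c = c'"
    proof (rule PiE_ext[OF cP])
      fix v assume v: "v \<in> {1..n}"
      have "\<sigma> (c v) = \<sigma> (c' v)" using fun_cong[OF eq, of v] v by (simp add: rename_def)
      moreover have "c v \<in> S" "c' v \<in> S" using cP v by auto
      ultimately show "c v = c' v" using inj by (meson inj_onD)
    qed
  qed
  then show ?thesis using card_inj_on_le[OF _ maps finite_onto_colorings[OF fT]] by blast
qed

lemma card_onto_colorings:
  assumes "finite S" and "\<forall>F\<in>E. F \<subseteq> {1..n}"
  shows "card (onto_colorings n E S) = onto_count n E (card S)"
proof -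
  have "card {1..card S} = card S" by simp
  then obtain \<sigma> where \<sigma>: "bij_betw \<sigma> S {1..card S}"
    using finite_same_card_bij[OF assms(1)] by (metis finite_atLeastAtMost)
  have "card (onto_colorings n E S) \<le> onto_count n E (card S)"
    unfolding onto_count_def using card_onto_colorings_le[OF _ \<sigma> assms(2)] by simp
  moreover have "onto_count n E (card S) \<le> card (onto_colorings n E S)"
    unfolding onto_count_def
    using card_onto_colorings_le[OF assms(1) bij_betw_the_inv_into[OF \<sigma>] assms(2)] .
  ultimately show ?thesis by (rule antisym)
qed

lemma onto_count_eq_0:
  assumes "n < j" shows "onto_count n E j = 0"
proof -
  have "onto_colorings n E {1..j} = {}"
  proof (rule ccontr)
    assume "onto_colorings n E {1..j} \<noteq> {}"
    then obtain c where "c ` {1..n} = {1..j}" by (auto simp: onto_colorings_def)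
    then have "card {1..j} \<le> card {1..n}" by (metis card_image_le finite_atLeastAtMost)
    then show False using assms by simp
  qed
  then show ?thesis by (simp add: onto_count_def)
qed

lemma onto_count_mono:
  assumes "\<And>c. proper E c \<Longrightarrow> proper E' c"
  shows "onto_count n E j \<le> onto_count n E' j"
  unfolding onto_count_def
  by (rule card_mono[OF finite_onto_colorings]) (auto simp: onto_colorings_def assms)

lemma chi_sum_onto_colorings:
  assumes "\<forall>F\<in>E. F \<subseteq> {1..n}"
  shows "chi n E k = (\<Sum>S\<in>Pow {1..k}. card (onto_colorings n E S))"
proof -
  have partition: "{c \<in> {1..n} \<rightarrow>\<^sub>E {1..k}. \<forall>F\<in>E. \<not> (\<exists>a. \<forall>v\<in>F. c v = a)}
      = (\<Union>S\<in>Pow {1..k}. onto_colorings n E S)"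
    by (auto simp: onto_colorings_def proper_def PiE_iff)
  show ?thesis unfolding chi_def partition
  proof (rule card_UN_disjoint)
    show "\<forall>S\<in>Pow {1..k}. finite (onto_colorings n E S)"
      using finite_onto_colorings finite_subset[OF _ finite_atLeastAtMost] by blast
  qed (auto simp: onto_colorings_def)
qed

lemma sum_Pow_card:
  fixes g :: "nat \<Rightarrow> 'b :: comm_semiring_1"
  assumes "finite A"
  shows "(\<Sum>S\<in>Pow A. g (card S)) = (\<Sum>j\<le>card A. of_nat (card A choose j) * g j)"
proof -
  have "(\<Sum>S\<in>Pow A. g (card S)) = (\<Sum>j\<le>card A. \<Sum>S\<in>{S. S \<in> Pow A \<and> card S = j}. g (card S))"
    by (rule sum.group[symmetric]) (auto simp: assms card_mono)
  also have "\<dots> = (\<Sum>j\<le>card A. of_nat (card A choose j) * g j)"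
    by (rule sum.cong[OF refl]) (simp add: n_subsets[OF assms, symmetric] conj_commute)
  finally show ?thesis .
qed

lemma chi_binomial_expansion:
  assumes "\<forall>F\<in>E. F \<subseteq> {1..n}"
  shows "chi n E k = (\<Sum>j\<le>n. onto_count n E j * (k choose j))"
proof -
  have "chi n E k = (\<Sum>S\<in>Pow {1..k}. onto_count n E (card S))"
    unfolding chi_sum_onto_colorings[OF assms]
    by (rule sum.cong[OF refl]) (auto intro!: card_onto_colorings assms intro: finite_subset)
  also have "\<dots> = (\<Sum>j\<le>k. onto_count n E j * (k choose j))"
    using sum_Pow_card[of "{1..k}" "onto_count n E"] by (simp add: mult.commute)
  also have "\<dots> = (\<Sum>j\<le>n. onto_count n E j * (k choose j))"
    by (rule sum.mono_neutral_cong) (auto simp: onto_count_eq_0 binomial_eq_0)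
  finally show ?thesis .
qed

text \<open>Pascal's rule applied to a sum in the basis \<open>(m+1 choose j)\<close>, re-expressed in the
  basis \<open>(m choose i)\<close>; the top term \<open>a\<^sub>n\<^sub>+\<^sub>1\<close> is included so that the shape is uniform.\<close>
lemma binomial_sum_shift:
  fixes a :: "nat \<Rightarrow> nat"
  shows "(\<Sum>j\<le>n. a j * (Suc m choose j)) + a (Suc n) * (m choose n)
     = (\<Sum>i\<le>n. (a i + a (Suc i)) * (m choose i))"
  by (induction n) (simp_all add: algebra_simps)

text \<open>The binomial basis is linearly independent: coefficients are determined by the values
  at \<open>0, 1, 2, \<dots>\<close> (evaluate at \<open>m = i\<close> and induct on \<open>i\<close>).\<close>
lemma binomial_coeffs_unique:
  fixes f g :: "nat \<Rightarrow> real"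
  assumes f0: "\<forall>i>n. f i = 0" and g0: "\<forall>i>n. g i = 0"
    and eq: "\<And>m. (\<Sum>i\<le>n. f i * real (m choose i)) = (\<Sum>i\<le>n. g i * real (m choose i))"
  shows "f = g"
proof -
  define d where "d i = f i - g i" for i
  have dz: "(\<Sum>i\<le>n. d i * real (m choose i)) = 0" for m
    using eq[of m] by (simp add: d_def left_diff_distrib sum_subtractf)
  have "d i = 0" for i
  proof (induction i rule: less_induct)
    case (less i)
    show ?case
    proof (cases "i \<le> n")
      case False then show ?thesis using f0 g0 by (simp add: d_def)
    next
      case True
      have "0 = (\<Sum>j\<le>n. d j * real (i choose j))" using dz by simp
      also have "\<dots> = (\<Sum>j\<le>i. d j * real (i choose j))"
        by (rule sum.mono_neutral_right) (auto simp: True)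
      also have "\<dots> = d i" using less.IH by (simp add: lessThan_Suc_atMost[symmetric])
      finally show ?thesis by simp
    qed
  qed
  then show ?thesis by (auto simp: d_def fun_eq_iff)
qed

lemma fvec_eqI:
  assumes f0: "\<forall>i>n. f i = 0"
    and rep: "\<And>m. p (Suc m) = (\<Sum>i\<le>n. f i * real (m choose i))"
  shows "fvec n p = f"
  unfolding fvec_def
proof (rule the_equality)
  have "p k = (\<Sum>i\<le>n. f i * real ((k - 1) choose i))" if "k \<ge> 1" for k
    using rep[of "k - 1"] that by simp
  then show "(\<forall>i>n. f i = 0) \<and> (\<forall>k\<ge>1. p k = (\<Sum>i\<le>n. f i * real ((k - 1) choose i)))"
    using f0 by blast
  fix g assume g: "(\<forall>i>n. g i = 0) \<and> (\<forall>k\<ge>1. p k = (\<Sum>i\<le>n. g i * real ((k - 1) choose i)))"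
  show "g = f"
  proof (rule binomial_coeffs_unique[of n])
    fix m show "(\<Sum>i\<le>n. g i * real (m choose i)) = (\<Sum>i\<le>n. f i * real (m choose i))"
      using g rep[of m] by fastforce
  qed (use f0 g in auto)
qed

lemma fvec_chi:
  assumes "\<forall>F\<in>E. F \<subseteq> {1..n}"
  shows "fvec n (\<lambda>k. real (chi n E k))
     = (\<lambda>i. if i \<le> n then real (onto_count n E i + onto_count n E (Suc i)) else 0)"
proof (rule fvec_eqI)
  fix m
  have "chi n E (Suc m) = (\<Sum>i\<le>n. (onto_count n E i + onto_count n E (Suc i)) * (m choose i))"
    using chi_binomial_expansion[OF assms] binomial_sum_shift[where a = "onto_count n E" and n = n and m = m]
      onto_count_eq_0[of n "Suc n" E]
    by simp
  then show "real (chi n E (Suc m)) = (\<Sum>i\<le>n.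
      (if i \<le> n then real (onto_count n E i + onto_count n E (Suc i)) else 0) * real (m choose i))"
    by (simp add: of_nat_sum)
qed simp

theorem mainTheorem7:
  fixes n :: nat and E E' Estar :: "nat set set"
  assumes "hypergraph n E"
    and "hypergraph n E'" and "E' \<subseteq> E"
    and "hypergraph n Estar"
    and "\<forall>F\<in>E. \<exists>Fs\<in>Estar. Fs \<subseteq> F"
  shows "\<forall>i\<le>n.
    0 \<le> fvec n (\<lambda>k. real (chi n Estar k)) i \<and>
    fvec n (\<lambda>k. real (chi n Estar k)) i \<le> fvec n (\<lambda>k. real (chi n E k)) i \<and>
    fvec n (\<lambda>k. real (chi n E k)) i \<le> fvec n (\<lambda>k. real (chi n E' k)) i"
proof -
  have "\<forall>F\<in>E. F \<subseteq> {1..n}" "\<forall>F\<in>E'. F \<subseteq> {1..n}" "\<forall>F\<in>Estar. F \<subseteq> {1..n}"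
    using assms(1,2,4) by (auto simp: hypergraph_def)
  note fv = fvec_chi[OF this(1)] fvec_chi[OF this(2)] fvec_chi[OF this(3)]
  have star_E: "onto_count n Estar j \<le> onto_count n E j" for j
    using onto_count_mono proper_refine[OF assms(5)] by blast
  have E_E': "onto_count n E j \<le> onto_count n E' j" for j
    using onto_count_mono proper_subset[OF assms(3)] by blast
  show ?thesis
    unfolding fv by (auto intro!: add_mono simp: star_E E_E')
qed

end
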